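(* Let $t\neq|$ be a tree of $\mathcal{A}$ such that $\Delta(t)=|\otimes t+t\otimes|$. Then $t$ is a corolla, i.e. its only internal vertex is the root vertex.
   Context: Trees: planar rooted trees in which every internal vertex has at least two children; the root vertex hangs from a trunk edge; leaves are edges without upper vertex; $|$ is the tree with one leaf and no internal vertex. $\mathcal{A}$ is the vector space over a field $\mathbb K$ with basis all such trees, with its tridendriform products (Loday–Ronco free tridendriform algebra on $Y=|\vee|$; $x_0\vee\cdots\vee x_k$ grafts trees on a new root; for $x=x^{(0)}\vee\cdots\vee x^{(k)}$, $y=y^{(0)}\vee\cdots\vee y^{(l)}$: $x\prec y=x^{(0)}\vee\cdots\vee x^{(k-1)}\vee(x^{(k)}*y)$, $x\cdot y=x^{(0)}\vee\cdots\vee x^{(k-1)}\vee(x^{(k)}*y^{(0)})\vee y^{(1)}\vee\cdots\vee y^{(l)}$, $x\succ y=(x*y^{(0)})\vee y^{(1)}\vee\cdots\vee y^{(l)}$, $*=\prec+\cdot+\succ$, $|*z=z*|=z$). $\Delta$ is the coproduct $\Delta(|)=|\otimes|$, $\Delta(t)=\sum_{c}G^c(t)\otimes P^c(t)$ over admissible cuts $c$ of $t$: an internal edge joins two internal vertices; a cut is a nonempty set of internal edges, plus the empty cut and the total cut (below the root); admissible means every root-to-leaf path meets at most one chosen edge. Removing the edges gives $P^c(t)$ (the component containing the root) and trees $G^c_1(t),\dots,G^c_m(t)$ from left to right, $G^c(t)=G^c_1(t)*\cdots*G^c_m(t)$; empty cut: $P^c=t$, $G^c=|$; total cut: $P^c=|$,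 $G^c=t$. *)

theory Defs
  imports Main "HOL-Library.Multiset"
begin

text \<open>Leaf is the tree with one leaf and no internal vertex.
  Node [x0,...,xk] is the grafting x0 \<or> ... \<or> xk on a new root vertex.\<close>
datatype tree = Leaf | Node "tree list"

fun valid :: "tree \<Rightarrow> bool" where
  "valid Leaf = True"
| "valid (Node ts) = (length ts \<ge> 2 \<and> (\<forall>c\<in>set ts. valid c))"

definition corolla :: "tree \<Rightarrow> bool" where
  "corolla t = (\<exists>ts. t = Node ts \<and> (\<forall>c\<in>set ts. c = Leaf))"

lemma size_mem_lt: "x \<in> set xs \<Longrightarrow> size x < size (Node xs)"
  by (induction xs) auto

text \<open>Results are linear combinations with natural
  coefficients, represented as multisets of trees (mapped into the field by of_nat).
  star = prec + dot + succ, with Leaf as unit.\<close>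
function star :: "tree \<Rightarrow> tree \<Rightarrow> tree multiset" where
  "star Leaf y = {#y#}"
| "star (Node xs) Leaf = {#Node xs#}"
| "star (Node xs) (Node ys) =
     (if xs = [] \<or> ys = [] then {#} else
        image_mset (\<lambda>z. Node (butlast xs @ [z])) (star (last xs) (Node ys))
      + image_mset (\<lambda>z. Node (butlast xs @ [z] @ tl ys)) (star (last xs) (hd ys))
      + image_mset (\<lambda>z. Node (z # tl ys)) (star (Node xs) (hd ys)))"
  by pat_completeness auto
termination
proof (relation "measure (\<lambda>(x, y). size x + size y)")
  fix xs ys :: "tree list"
  assume h: "\<not> (xs = [] \<or> ys = [])"
  have a: "size (last xs) < size (Node xs)" using h by (intro size_mem_lt last_in_set) simp
  have b: "size (hd ys) < size (Node ys)" using h by (intro size_mem_lt hd_in_set) simp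
  show "((last xs, Node ys), Node xs, Node ys) \<in> measure (\<lambda>(x, y). size x + size y)" using a by simp
  show "((last xs, hd ys), Node xs, Node ys) \<in> measure (\<lambda>(x, y). size x + size y)" using a b by simp
  show "((Node xs, hd ys), Node xs, Node ys) \<in> measure (\<lambda>(x, y). size x + size y)" using b by simp
qed simp

definition mstar :: "tree multiset \<Rightarrow> tree multiset \<Rightarrow> tree multiset" where
  "mstar A B = sum_mset (image_mset (\<lambda>a. sum_mset (image_mset (star a) B)) A)"

fun gprod :: "tree list \<Rightarrow> tree multiset" where
  "gprod [] = {#Leaf#}"
| "gprod (g # gs) = mstar {#g#} (gprod gs)"

text \<open>Admissible cuts of a tree other than the total cut: each yields the list of
  pruned trees G_1..G_m (left to right) and the root part P. A cut edge becomes a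
  leaf of P and the trunk of the pruned subtree. The empty cut is included.\<close>
fun rcuts :: "tree \<Rightarrow> (tree list \<times> tree) list" where
  "rcuts Leaf = [([], Leaf)]"
| "rcuts (Node ts) =
     map (\<lambda>ch. (concat (map fst ch), Node (map snd ch)))
       (product_lists (map (\<lambda>c. (if c = Leaf then [] else [([c], Leaf)]) @ rcuts c) ts))"

definition cuts :: "tree \<Rightarrow> (tree list \<times> tree) list" where
  "cuts t = ([t], Leaf) # rcuts t"

definition Delta_ms :: "tree \<Rightarrow> (tree \<times> tree) multiset" where
  "Delta_ms t = (if t = Leaf then {#(Leaf, Leaf)#}
     else sum_list (map (\<lambda>(gs, p). image_mset (\<lambda>g. (g, p)) (gprod gs)) (cuts t)))"

text \<open>Elements of A \<otimes> A over the field 'k, as coefficient functions on basis pairs.\<close>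
definition Delta :: "tree \<Rightarrow> tree \<times> tree \<Rightarrow> 'k::semiring_1" where
  "Delta t = (\<lambda>x. of_nat (count (Delta_ms t) x))"

definition tens :: "tree \<Rightarrow> tree \<Rightarrow> tree \<times> tree \<Rightarrow> 'k::semiring_1" where
  "tens a b = (\<lambda>x. if x = (a, b) then 1 else 0)"

end

theory Submission
  imports Defs
begin

text \<open>If \<open>t\<close> is not a corolla, some child \<open>c\<close> of its root is an internal tree. Cutting
  the single edge below \<open>c\<close> contributes the tensor \<open>c \<otimes> P\<close>, where \<open>P\<close> is \<open>t\<close> with \<open>c\<close>
  replaced by a leaf. The root part of an admissible cut determines the cut, because the
  pruned subtrees are never leaves; hence \<open>c \<otimes> P\<close> occurs in \<open>\<Delta>(t)\<close> with coefficient
  exactly \<open>1\<close>, which is nonzero in every characteristic. But it does not occur in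
  \<open>| \<otimes> t + t \<otimes> |\<close>.\<close>

definition cut_choices :: "tree \<Rightarrow> (tree list \<times> tree) list" where
  "cut_choices c = (if c = Leaf then [] else [([c], Leaf)]) @ rcuts c"

lemma rcuts_Node:
  "rcuts (Node ts) =
     map (\<lambda>ch. (concat (map fst ch), Node (map snd ch))) (product_lists (map cut_choices ts))"
  unfolding cut_choices_def by simp

declare rcuts.simps(2) [simp del]

lemma rcuts_root_ne_Leaf: "x \<in> set (rcuts (Node ts)) \<Longrightarrow> snd x \<noteq> Leaf"
  by (auto simp: rcuts_Node)

lemma distinct_map_product_lists:
  assumes "\<forall>xs \<in> set xss. distinct (map f xs)"
  shows "distinct (map (map f) (product_lists xss))"
  using assms
proof (induction xss)
  case Nil
  then show ?case by simp
next
  case (Cons xs xss)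
  then have IH: "distinct (map (map f) (product_lists xss))" and "distinct (map f xs)"
    by simp_all
  then show ?case
  proof (induction xs)
    case Nil
    then show ?case by simp
  next
    case (Cons x xs)
    have "distinct (map (map f) (map ((#) x) (product_lists xss)))"
      using IH by (simp add: distinct_map inj_on_def)
    then show ?case using Cons by (auto simp: map_concat)
  qed
qed

lemma distinct_rcuts_roots: "distinct (map snd (rcuts t))"
proof (induction t rule: rcuts.induct)
  case 1
  then show ?case by simp
next
  case (2 ts)
  have "distinct (map snd (cut_choices c))" if "c \<in> set ts" for c
  proof (cases c)
    case Leaf
    then show ?thesis by (simp add: cut_choices_def)
  next
    case (Node cs)
    then show ?thesis
      using 2 that rcuts_root_ne_Leaf by (fastforce simp: cut_choices_def)
  qed
  then have "distinct (map (map snd) (product_lists (map cut_choices ts)))"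
    by (intro distinct_map_product_lists) auto
  then show ?case
    by (simp add: rcuts_Node o_def distinct_map inj_on_def)
qed

lemma rcuts_empty_cut: "([], t) \<in> set (rcuts t)"
proof (induction t rule: rcuts.induct)
  case 1
  then show ?case by simp
next
  case (2 ts)
  then have "map (Pair []) ts \<in> set (product_lists (map cut_choices ts))"
    by (auto simp: product_lists_set cut_choices_def list_all2_conv_all_nth)
  then show ?case
    by (force simp: rcuts_Node o_def)
qed

lemma rcuts_single_cut:
  assumes "c \<noteq> Leaf"
  shows "([c], Node (as @ Leaf # bs)) \<in> set (rcuts (Node (as @ c # bs)))"
proof -
  define ch where "ch = map (Pair []) as @ ([c], Leaf) # map (Pair []) bs"
  have empty_choices: "list_all2 (\<lambda>x ys. x \<in> set ys) (map (Pair []) xs) (map cut_choices xs)"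
    for xs
    by (auto simp: cut_choices_def list_all2_conv_all_nth rcuts_empty_cut)
  have "ch \<in> set (product_lists (map cut_choices (as @ c # bs)))"
    using empty_choices[of as] empty_choices[of bs] assms
    by (simp add: product_lists_set ch_def list_all2_appendI cut_choices_def)
  moreover have "concat (map fst ch) = [c]" "map snd ch = as @ Leaf # bs"
    by (simp_all add: ch_def o_def concat_eq_Nil_conv[THEN iffD2])
  ultimately show ?thesis
    by (force simp: rcuts_Node)
qed

lemma sum_list_map_eq_single:
  fixes f :: "'a \<Rightarrow> 'b::comm_monoid_add"
  assumes "distinct xs" "a \<in> set xs" "\<And>y. y \<in> set xs \<Longrightarrow> y \<noteq> a \<Longrightarrow> f y = 0"
  shows "sum_list (map f xs) = f a"
proof -
  have "sum_list (map f xs) = sum f (set xs)"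
    using assms(1) by (simp add: sum_list_distinct_conv_sum_set)
  also have "\<dots> = f a + sum f (set xs - {a})"
    using assms(2) by (simp add: sum.remove)
  also have "\<dots> = f a"
    using assms(3) by simp
  finally show ?thesis .
qed

lemma count_sum_list: "count (sum_list Ms) x = sum_list (map (\<lambda>M. count M x) Ms)"
  by (induction Ms) auto

lemma count_Delta_ms_single_cut:
  assumes "c \<noteq> Leaf"
  shows "count (Delta_ms (Node (as @ c # bs))) (c, Node (as @ Leaf # bs)) = 1"
proof -
  define t where "t = Node (as @ c # bs)"
  define P where "P = Node (as @ Leaf # bs)"
  define f where "f = (\<lambda>(gs, p). count (image_mset (\<lambda>g. (g, p)) (gprod gs)) (c, P))"
  have cut: "([c], P) \<in> set (rcuts t)"
    unfolding t_def P_def using assms by (rule rcuts_single_cut)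
  have root_determines_cut: "y = ([c], P)" if "y \<in> set (rcuts t)" "snd y = P" for y
    using distinct_rcuts_roots[of t] cut that by (auto simp: distinct_map inj_on_def)
  have "f ([c], P) = 1"
    using assms by (cases c) (simp_all add: f_def mstar_def)
  moreover have other_root: "f y = 0" if "snd y \<noteq> P" for y
    using that by (auto simp: f_def count_image_mset split: prod.splits)
  moreover have "distinct (rcuts t)"
    using distinct_rcuts_roots[of t] by (simp add: distinct_map)
  ultimately have "sum_list (map f (rcuts t)) = 1"
    using sum_list_map_eq_single[of "rcuts t", OF _ cut] root_determines_cut by metis
  moreover have "f ([t], Leaf) = 0"
    by (rule other_root) (simp add: P_def)
  moreover have "t \<noteq> Leaf"
    by (simp add: t_def)
  ultimately have "count (Delta_ms t) (c, P) = 1"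
    by (simp add: Delta_ms_def cuts_def count_sum_list o_def f_def case_prod_unfold)
  then show ?thesis
    by (simp add: t_def P_def)
qed

theorem mainTheorem7:
  fixes t :: tree
  assumes "valid t" and "t \<noteq> Leaf"
    and "(Delta t :: tree \<times> tree \<Rightarrow> 'k::field) = (\<lambda>x. tens Leaf t x + tens t Leaf x)"
  shows "corolla t"
proof (rule ccontr)
  assume "\<not> corolla t"
  moreover obtain ts where t: "t = Node ts"
    using assms(2) by (cases t) auto
  ultimately obtain c where "c \<in> set ts" "c \<noteq> Leaf"
    by (auto simp: corolla_def)
  then obtain as bs where ts: "ts = as @ c # bs" and "c \<noteq> Leaf"
    by (metis split_list)
  define P where "P = Node (as @ Leaf # bs)"
  have "(Delta t :: tree \<times> tree \<Rightarrow> 'k) (c, P) = 1"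
    using count_Delta_ms_single_cut[OF \<open>c \<noteq> Leaf\<close>] by (simp add: Delta_def t ts P_def)
  moreover have "tens Leaf t (c, P) + tens t Leaf (c, P) = (0::'k)"
    using \<open>c \<noteq> Leaf\<close> by (simp add: tens_def P_def)
  ultimately show False
    using assms(3) by simp
qed

end
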